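(* Let $\alpha=\exp\left(\frac{2\pi i}{5}\right)$, let $c,x\in\mathbb{C}$, and let $(a_1,A_1),\dots,(a_p,A_p)$ and $(b_1,B_1),\dots,(b_q,B_q)$ be parameter pairs ($a_j,b_j\in\mathbb{C}$, $A_j,B_j$ nonzero reals) such that all Pochhammer symbols involved are well defined and all series involved converge. Then $$\sum_{k=0}^{4}\alpha^{k}\,{}_p\Psi^{*}_q\left[\begin{array}{c}(a_1,A_1),\dots,(a_p,A_p);\\(b_1,B_1),\dots,(b_q,B_q);\end{array} c(x\alpha^k)^2\right] =\frac{(a_1)_{2A_1}\cdots(a_p)_{2A_p}}{(b_1)_{2B_1}\cdots(b_q)_{2B_q}}\,\frac{5c^2x^4}{2}\;{}_p\Psi^{*}_{q+4}\left[\begin{array}{c}(a_1+2A_1,5A_1),\dots,(a_p+2A_p,5A_p);\\ \left(\tfrac35,1\right),\left(\tfrac45,1\right),\left(\tfrac65,1\right),\left(\tfrac75,1\right),(b_1+2B_1,5B_1),\dots,(b_q+2B_q,5B_q);\end{array}\left(\frac{cx^2}{5}\right)^5\right].$$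
   Context: For $\lambda,\nu\in\mathbb{C}$ the Pochhammer symbol is $(\lambda)_\nu=\Gamma(\lambda+\nu)/\Gamma(\lambda)$ (with $(\lambda)_0=1$). The normalized Fox–Wright function is $${}_p\Psi^{*}_q\left[\begin{array}{c}(\alpha_1,A_1),\dots,(\alpha_p,A_p);\\(\beta_1,B_1),\dots,(\beta_q,B_q);\end{array}z\right]=\sum_{n=0}^{\infty}\frac{(\alpha_1)_{nA_1}\cdots(\alpha_p)_{nA_p}}{(\beta_1)_{nB_1}\cdots(\beta_q)_{nB_q}}\frac{z^n}{n!},$$ where $\alpha_i,\beta_j\in\mathbb{C}$ and $A_i,B_j$ are nonzero reals. Values of parameters and variables for which the expressions do not make sense are excluded. *)

theory Defs
  imports "HOL-Analysis.Analysis"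
begin

definition fpoch :: "complex \<Rightarrow> real \<Rightarrow> complex" where
  "fpoch l v = (if v = 0 then 1 else Gamma (l + complex_of_real v) / Gamma l)"

definition poch_ok :: "complex \<Rightarrow> real \<Rightarrow> bool" where
  "poch_ok l v \<longleftrightarrow> v = 0 \<or> (l \<notin> \<int>\<^sub>\<le>\<^sub>0 \<and> l + complex_of_real v \<notin> \<int>\<^sub>\<le>\<^sub>0)"

definition fw_term :: "(complex \<times> real) list \<Rightarrow> (complex \<times> real) list \<Rightarrow> complex \<Rightarrow> nat \<Rightarrow> complex" where
  "fw_term as bs z n =
     (\<Prod>(a, A)\<leftarrow>as. fpoch a (real n * A)) / (\<Prod>(b, B)\<leftarrow>bs. fpoch b (real n * B))
       * z ^ n / of_nat (fact n)"

definition FoxWright :: "(complex \<times> real) list \<Rightarrow> (complex \<times> real) list \<Rightarrow> complex \<Rightarrow> complex" where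
  "FoxWright as bs z = (\<Sum>n. fw_term as bs z n)"

definition fw_ok :: "(complex \<times> real) list \<Rightarrow> (complex \<times> real) list \<Rightarrow> bool" where
  "fw_ok as bs \<longleftrightarrow>
     (\<forall>(a, A)\<in>set as. A \<noteq> 0 \<and> (\<forall>n::nat. poch_ok a (real n * A))) \<and>
     (\<forall>(b, B)\<in>set bs. B \<noteq> 0 \<and> (\<forall>n::nat. poch_ok b (real n * B)))"

definition fw_shift :: "complex \<times> real \<Rightarrow> complex \<times> real" where
  "fw_shift p = (fst p + 2 * complex_of_real (snd p), 5 * snd p)"

end

theory Submission
  imports Defs
begin

(* Weighting the five series by \<alpha>^k multiplies their n-th terms by the power sum
   \<Sum>k<5. (\<alpha>^(2n+1))^k, which is 5 if n = 5m+2 and 0 otherwise.  On the surviving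
   terms the Pochhammer symbols split as (a)_((5m+2)A) = (a)_(2A) (a+2A)_(m 5A), and
   (5m+2)! = 2 5^(5m) (3/5)_m (4/5)_m (6/5)_m (7/5)_m m!, which turns the subseries into
   the Fox-Wright series on the right-hand side. *)

lemma fpoch_add:
  assumes "poch_ok a s"
  shows "fpoch a (s + t) = fpoch a s * fpoch (a + complex_of_real s) t"
proof (cases "s = 0 \<or> t = 0")
  case True
  then show ?thesis by (auto simp: fpoch_def)
next
  case False
  then have "Gamma a \<noteq> 0" "Gamma (a + complex_of_real s) \<noteq> 0"
    using assms by (auto simp: poch_ok_def intro!: Gamma_nonzero)
  then show ?thesis
    using False by (auto simp: fpoch_def add.assoc simp flip: of_real_add)
qed

lemma fpoch_of_nat:
  assumes "a \<notin> \<int>\<^sub>\<le>\<^sub>0"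
  shows "fpoch a (real m) = pochhammer a m"
  using assms by (cases "m = 0") (simp_all add: fpoch_def pochhammer_Gamma)

lemma numeral_fraction_notin_nonpos_Ints:
  "(numeral k / numeral l :: complex) \<notin> \<int>\<^sub>\<le>\<^sub>0"
  using of_real_in_nonpos_Ints_iff[of "numeral k / numeral l :: real", where 'a = complex]
  by (auto dest: nonpos_Ints_nonpos)

lemma fact_5m_plus_2:
  "(fact (5 * m + 2) :: 'a::field_char_0) =
     2 * 5 ^ (5 * m) * (pochhammer (3/5) m * pochhammer (4/5) m * pochhammer (6/5) m * pochhammer (7/5) m)
       * fact m"
proof (induction m)
  case 0
  then show ?case by (simp add: numeral_2_eq_2)
next
  case (Suc m)
  define y :: 'a where "y = of_nat m"
  have "5 * Suc m + 2 = Suc (Suc (Suc (Suc (Suc (5 * m + 2)))))"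
    by simp
  then have "(fact (5 * Suc m + 2) :: 'a) =
      fact (5 * m + 2) * ((5*y + 3) * (5*y + 4) * (5*y + 5) * (5*y + 6) * (5*y + 7))"
    unfolding y_def by (simp only: fact_Suc) (simp add: algebra_simps)
  also have "(5*y + 3) * (5*y + 4) * (5*y + 5) * (5*y + 6) * (5*y + 7) =
      5 ^ 5 * ((3/5 + y) * (4/5 + y) * (6/5 + y) * (7/5 + y) * (y + 1))"
    by (simp add: field_simps)
  finally show ?case
    unfolding Suc.IH pochhammer_Suc fact_Suc y_def by (simp add: power_add ac_simps)
qed

lemma fw_term_mult_power:
  "fw_term as bs (w * z) n = w ^ n * fw_term as bs z n"
  by (simp add: fw_term_def power_mult_distrib)

lemma prod_fpoch_fw_shift:
  assumes "\<forall>(a, A)\<in>set as. poch_ok a (2 * A)"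
  shows "(\<Prod>(a, A)\<leftarrow>as. fpoch a (real (5 * m + 2) * A)) =
           (\<Prod>(a, A)\<leftarrow>as. fpoch a (2 * A)) * (\<Prod>(a, A)\<leftarrow>map fw_shift as. fpoch a (real m * A))"
  using assms
proof (induction as)
  case Nil
  then show ?case by simp
next
  case (Cons p as)
  obtain a A where p: "p = (a, A)" by fastforce
  have "fpoch a (real (5 * m + 2) * A) = fpoch a (2 * A + real m * (5 * A))"
    by (simp add: algebra_simps)
  also have "\<dots> = fpoch a (2 * A) * fpoch (a + 2 * complex_of_real A) (real m * (5 * A))"
    using Cons.prems p by (simp add: fpoch_add)
  finally show ?case
    using Cons by (simp add: p fw_shift_def)
qed

lemma prod_fpoch_fifths:
  "(\<Prod>(b, B)\<leftarrow>[(3/5, 1), (4/5, 1), (6/5, 1), (7/5, 1)]. fpoch b (real m * B)) =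
     pochhammer (3/5) m * pochhammer (4/5) m * pochhammer (6/5) m * pochhammer (7/5) m"
  by (simp add: fpoch_of_nat numeral_fraction_notin_nonpos_Ints)

lemma fw_term_quintisection:
  assumes "\<forall>(a, A)\<in>set as. poch_ok a (2 * A)"
    and "\<forall>(b, B)\<in>set bs. poch_ok b (2 * B)"
  shows "fw_term as bs z (5 * m + 2) =
     (\<Prod>(a, A)\<leftarrow>as. fpoch a (2 * A)) / (\<Prod>(b, B)\<leftarrow>bs. fpoch b (2 * B)) * (z\<^sup>2 / 2)
       * fw_term (map fw_shift as) ([(3/5, 1), (4/5, 1), (6/5, 1), (7/5, 1)] @ map fw_shift bs)
           ((z / 5) ^ 5) m"
proof -
  define Q :: complex
    where "Q = pochhammer (3/5) m * pochhammer (4/5) m * pochhammer (6/5) m * pochhammer (7/5) m"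
  define Pa where "Pa = (\<Prod>(a, A)\<leftarrow>map fw_shift as. fpoch a (real m * A))"
  define Pb where "Pb = (\<Prod>(b, B)\<leftarrow>map fw_shift bs. fpoch b (real m * B))"
  define Pa2 where "Pa2 = (\<Prod>(a, A)\<leftarrow>as. fpoch a (2 * A))"
  define Pb2 where "Pb2 = (\<Prod>(b, B)\<leftarrow>bs. fpoch b (2 * B))"
  have "z ^ (5 * m + 2) = z\<^sup>2 * (z ^ 5) ^ m" "(5::complex) ^ (5 * m) = (5 ^ 5) ^ m"
    by (simp_all add: power_add power_mult power2_eq_square)
  then have power_fact: "z ^ (5 * m + 2) / fact (5 * m + 2) = z\<^sup>2 / 2 * ((z / 5) ^ 5) ^ m / (Q * fact m)"
    unfolding fact_5m_plus_2 Q_def power_divide by (simp add: field_simps)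
  have "fw_term as bs z (5 * m + 2) = Pa2 * Pa / (Pb2 * Pb) * (z ^ (5 * m + 2) / fact (5 * m + 2))"
    unfolding fw_term_def prod_fpoch_fw_shift[OF assms(1)] prod_fpoch_fw_shift[OF assms(2)]
      Pa_def Pb_def Pa2_def Pb2_def of_nat_fact by (simp only: times_divide_eq_right)
  also have "\<dots> = Pa2 / Pb2 * (z\<^sup>2 / 2) * (Pa / (Q * Pb) * ((z / 5) ^ 5) ^ m / fact m)"
    unfolding power_fact unfolding divide_inverse inverse_mult_distrib by algebra
  finally show ?thesis
    unfolding fw_term_def map_append prod_list.append prod_fpoch_fifths Q_def Pa_def Pb_def Pa2_def Pb2_def
      of_nat_fact .
qed

lemma sum_powers_root_of_unity:
  assumes "n > 0"
  shows "(\<Sum>k<n. (exp (2 * of_real pi * \<i> / of_nat n) ^ j) ^ k) = (if n dvd j then of_nat n else 0)"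
proof -
  define \<omega> where "\<omega> = exp (2 * of_real pi * \<i> / of_nat n) ^ j"
  have \<omega>: "\<omega> = exp (2 * of_real pi * \<i> * of_nat j / of_nat n)"
    unfolding \<omega>_def exp_of_nat_mult[symmetric] by (simp add: ac_simps)
  have "\<omega> ^ n = 1"
    unfolding \<omega> using assms by (intro complex_root_unity) simp
  moreover have "\<omega> = 1 \<longleftrightarrow> n dvd j"
    unfolding \<omega> using assms by (intro complex_root_unity_eq_1) simp
  ultimately show ?thesis
    unfolding \<omega>_def[symmetric] by (auto simp: sum_gp_strict)
qed

lemma sum_fw_term_roots_of_unity:
  assumes "N > 0"
  defines "\<omega> \<equiv> exp (2 * complex_of_real pi * \<i> / of_nat N)"
  shows "(\<Sum>k<N. \<omega> ^ k * fw_term as bs (z * (\<omega> ^ k)\<^sup>2) n) =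
           (if N dvd 2 * n + 1 then of_nat N else 0) * fw_term as bs z n"
proof -
  have "\<omega> ^ k * fw_term as bs (z * (\<omega> ^ k)\<^sup>2) n = (\<omega> ^ (2 * n + 1)) ^ k * fw_term as bs z n" for k
  proof -
    have "\<omega> ^ k * ((\<omega> ^ k)\<^sup>2) ^ n = (\<omega> ^ (2 * n + 1)) ^ k"
      by (simp add: algebra_simps flip: power_mult power_add)
    then show ?thesis
      using fw_term_mult_power[of as bs "(\<omega> ^ k)\<^sup>2" z n] by (simp add: ac_simps)
  qed
  then have "(\<Sum>k<N. \<omega> ^ k * fw_term as bs (z * (\<omega> ^ k)\<^sup>2) n) =
      (\<Sum>k<N. (\<omega> ^ (2 * n + 1)) ^ k) * fw_term as bs z n"
    by (simp add: sum_distrib_right)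
  then show ?thesis
    unfolding \<omega>_def sum_powers_root_of_unity[OF assms(1)] .
qed

lemma sums_zero_outside_progression:
  fixes f :: "nat \<Rightarrow> 'a::real_normed_vector"
  assumes "q > 0"
    and "\<And>n. n mod q \<noteq> r \<Longrightarrow> f n = 0"
    and "(\<lambda>m. f (q * m + r)) sums s"
  shows "f sums s"
proof -
  have "strict_mono (\<lambda>m. q * m + r)"
    using assms(1) by (auto intro: strict_monoI)
  moreover have "f n = 0" if "n \<notin> range (\<lambda>m. q * m + r)" for n
  proof -
    have "n \<noteq> q * (n div q) + r"
      using that by blast
    then have "n mod q \<noteq> r"
      by (metis div_mult_mod_eq mult.commute)
    then show ?thesis by (rule assms(2))
  qed
  ultimately show ?thesis
    using assms(3) by (subst sums_mono_reindex[symmetric]) auto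
qed

theorem theorem6:
  fixes c x :: complex and as bs :: "(complex \<times> real) list"
  defines "\<alpha> \<equiv> exp (2 * complex_of_real pi * \<i> / 5)"
  defines "as' \<equiv> map fw_shift as"
  defines "bs' \<equiv> [(3/5, 1), (4/5, 1), (6/5, 1), (7/5, 1)] @ map fw_shift bs"
  assumes ok: "fw_ok as bs"
    and ok2: "\<forall>(a, A)\<in>set as. poch_ok a (2 * A)"
    and ok3: "\<forall>(b, B)\<in>set bs. poch_ok b (2 * B)"
    and ok': "fw_ok as' bs'"
    and conv: "\<forall>k<5::nat. summable (fw_term as bs (c * (x * \<alpha> ^ k)\<^sup>2))"
    and conv': "summable (fw_term as' bs' ((c * x\<^sup>2 / 5) ^ 5))"
  shows "(\<Sum>k<5::nat. \<alpha> ^ k * FoxWright as bs (c * (x * \<alpha> ^ k)\<^sup>2)) =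
     (\<Prod>(a, A)\<leftarrow>as. fpoch a (2 * A)) / (\<Prod>(b, B)\<leftarrow>bs. fpoch b (2 * B))
       * (5 * c\<^sup>2 * x ^ 4 / 2) * FoxWright as' bs' ((c * x\<^sup>2 / 5) ^ 5)"
    (is "?lhs = ?K * FoxWright as' bs' ?w")
proof -
  define f where "f n = (\<Sum>k<5::nat. \<alpha> ^ k * fw_term as bs (c * (x * \<alpha> ^ k)\<^sup>2) n)" for n
  have f_eq: "f n = (if n mod 5 = 2 then 5 else 0) * fw_term as bs (c * x\<^sup>2) n" for n
  proof -
    have "c * (x * \<alpha> ^ k)\<^sup>2 = c * x\<^sup>2 * (\<alpha> ^ k)\<^sup>2" for k
      by (simp add: power_mult_distrib)
    then have "f n = (\<Sum>k<5. \<alpha> ^ k * fw_term as bs (c * x\<^sup>2 * (\<alpha> ^ k)\<^sup>2) n)"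
      unfolding f_def by (simp only:)
    also have "\<dots> = (if 5 dvd 2 * n + 1 then 5 else 0) * fw_term as bs (c * x\<^sup>2) n"
      using sum_fw_term_roots_of_unity[of 5 as bs "c * x\<^sup>2" n] by (simp add: \<alpha>_def)
    also have "5 dvd 2 * n + 1 \<longleftrightarrow> n mod 5 = 2"
      by presburger
    finally show ?thesis .
  qed
  have "f sums ?lhs"
    unfolding f_def FoxWright_def using conv by (intro sums_sum sums_mult summable_sums) auto
  moreover have "f sums (?K * FoxWright as' bs' ?w)"
  proof (rule sums_zero_outside_progression[where q = 5 and r = 2])
    have "f (5 * m + 2) = ?K * fw_term as' bs' ?w m" for m
    proof -
      have "(5 * m + 2) mod 5 = 2"
        by presburger
      then show ?thesis
        unfolding f_eq fw_term_quintisection[OF ok2 ok3] as'_def bs'_def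
        by (simp add: power_mult_distrib flip: power_mult)
    qed
    then show "(\<lambda>m. f (5 * m + 2)) sums (?K * FoxWright as' bs' ?w)"
      unfolding FoxWright_def by (simp only:) (intro sums_mult summable_sums conv')
  qed (simp_all add: f_eq)
  ultimately show ?thesis
    by (rule sums_unique2)
qed

end
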